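(* Let $G$ be a graph and $k$ an integer, and assume: (A) $G$ contains no two adjacent vertices $u,w$ with $N(w)\subseteq N[u]$; and (B) there is no vertex $w$ of $G$ together with a partition $(C_1,C_2)$ of $N(w)$ such that $|C_1|\ge|C_2|$, $C_1$ and $C_2$ are cliques, and every vertex $c_1\in C_1$ lies in exactly one pair $\{c_1,c_2\}$ with $c_2\in C_2$ and $\{c_1,c_2\}\notin E(G)$. Let $v$ be a vertex of degree three with $N(v)=\{a,b,c\}$. Let $G'$ be the graph with vertex set $V(G)\setminus\{v\}$ whose edge set consists of the edges of $G-v$ together with the set $F$ of pairs $\{a,b\}$, $\{b,c\}$, $\{a,x\}$ for $x\in N_G(b)$, $\{b,y\}$ for $y\in N_G(c)$, and $\{c,z\}$ for $z\in N_G(a)$ (pairs containing $v$ being omitted). Then $G$ has a vertex cover of size $k$ if and only if $G'$ has a vertex cover of size $k$.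
   Context: All graphs are finite, simple, undirected. $N(x)=N_G(x)$ is the open and $N[x]=N(x)\cup\{x\}$ the closed neighborhood. A clique is a set of pairwise adjacent vertices. A vertex cover is a set of vertices containing at least one endpoint of every edge; "has a vertex cover of size $k$" means has a vertex cover of size at most $k$. *)

theory Defs
  imports Main
begin

definition simple_graph :: "'a set \<Rightarrow> 'a set set \<Rightarrow> bool" where
  "simple_graph V E \<longleftrightarrow> finite V \<and>
     (\<forall>e\<in>E. \<exists>x y. e = {x, y} \<and> x \<noteq> y \<and> x \<in> V \<and> y \<in> V)"

definition nbhd :: "'a set set \<Rightarrow> 'a \<Rightarrow> 'a set" where
  "nbhd E x = {y. {x, y} \<in> E}"

definition cnbhd :: "'a set set \<Rightarrow> 'a \<Rightarrow> 'a set" where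
  "cnbhd E x = insert x (nbhd E x)"

definition is_clique :: "'a set set \<Rightarrow> 'a set \<Rightarrow> bool" where
  "is_clique E C \<longleftrightarrow> (\<forall>x\<in>C. \<forall>y\<in>C. x \<noteq> y \<longrightarrow> {x, y} \<in> E)"

definition is_vertex_cover :: "'a set \<Rightarrow> 'a set set \<Rightarrow> 'a set \<Rightarrow> bool" where
  "is_vertex_cover V E C \<longleftrightarrow> C \<subseteq> V \<and> (\<forall>e\<in>E. e \<inter> C \<noteq> {})"

text \<open>"has a vertex cover of size k" = has a vertex cover of size at most k.\<close>
definition has_vc :: "'a set \<Rightarrow> 'a set set \<Rightarrow> int \<Rightarrow> bool" where
  "has_vc V E k \<longleftrightarrow> (\<exists>C. is_vertex_cover V E C \<and> int (card C) \<le> k)"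

definition new_edges :: "'a set set \<Rightarrow> 'a \<Rightarrow> 'a \<Rightarrow> 'a \<Rightarrow> 'a \<Rightarrow> 'a set set" where
  "new_edges E v a b c =
     {{p, q} | p q. p \<noteq> q \<and> p \<noteq> v \<and> q \<noteq> v \<and>
        ((p = a \<and> q = b) \<or> (p = b \<and> q = c) \<or>
         (p = a \<and> q \<in> nbhd E b) \<or> (p = b \<and> q \<in> nbhd E c) \<or> (p = c \<and> q \<in> nbhd E a))}"

definition reduced_edges :: "'a set set \<Rightarrow> 'a \<Rightarrow> 'a \<Rightarrow> 'a \<Rightarrow> 'a \<Rightarrow> 'a set set" where
  "reduced_edges E v a b c = {e \<in> E. v \<notin> e} \<union> new_edges E v a b c"

end

theory Submission
  imports Defs
begin

(* Conditions (A) and (B) force N(v) = {a, b, c} to be independent: an edge ab together with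
   ac or bc makes v a vertex dominated by a neighbour, and otherwise ({a, b}, {c}) is a
   forbidden partition of N(v).
   A cover of G avoiding v contains a, b, c and hence covers G'; a cover containing v becomes
   a cover of G' when v is traded for a suitable neighbour. Conversely, a cover of G'
   containing a, b, c covers G; otherwise the new edges force some m in {a, b, c} into the
   cover together with N(m) - v, and trading m for v gives a cover of G. *)

definition no_dominated_edge :: "'a set \<Rightarrow> 'a set set \<Rightarrow> bool" where
  "no_dominated_edge V E \<longleftrightarrow>
     (\<forall>u\<in>V. \<forall>w\<in>V. {u, w} \<in> E \<longrightarrow> \<not> nbhd E w \<subseteq> cnbhd E u)"

definition matched_clique_partition :: "'a set set \<Rightarrow> 'a \<Rightarrow> 'a set \<Rightarrow> 'a set \<Rightarrow> bool" where
  "matched_clique_partition E w C1 C2 \<longleftrightarrow>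
     C1 \<union> C2 = nbhd E w \<and> C1 \<inter> C2 = {} \<and> card C1 \<ge> card C2 \<and>
     is_clique E C1 \<and> is_clique E C2 \<and> (\<forall>c1\<in>C1. \<exists>!c2. c2 \<in> C2 \<and> {c1, c2} \<notin> E)"

lemma nbhd_sym: "y \<in> nbhd E x \<longleftrightarrow> x \<in> nbhd E y"
  by (simp add: nbhd_def insert_commute)

lemma simple_graph_edgeE:
  assumes "simple_graph V E" "e \<in> E"
  obtains x y where "e = {x, y}" "x \<noteq> y" "x \<in> V" "y \<in> V"
  using assms unfolding simple_graph_def by blast

lemma simple_graph_not_in_nbhd_self: "simple_graph V E \<Longrightarrow> x \<notin> nbhd E x"
  unfolding nbhd_def by (auto elim: simple_graph_edgeE simp: doubleton_eq_iff)

lemma simple_graph_nbhd_subset: "simple_graph V E \<Longrightarrow> nbhd E x \<subseteq> V"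
  unfolding nbhd_def by (auto elim!: simple_graph_edgeE simp: doubleton_eq_iff)

lemma degree_three_nbhd_no_edge:
  assumes "no_dominated_edge V E"
    and "\<forall>w\<in>V. \<forall>C1 C2. \<not> matched_clique_partition E w C1 C2"
    and "simple_graph V E" "v \<in> V" "nbhd E v = {x, y, z}"
    and "x \<noteq> y" "y \<noteq> z" "x \<noteq> z"
  shows "{x, y} \<notin> E"
proof
  assume xy: "{x, y} \<in> E"
  have "{x, v} \<in> E" "{y, v} \<in> E"
    using assms(5) nbhd_sym[of _ E v] unfolding nbhd_def by auto
  moreover have "x \<in> V" "y \<in> V"
    using assms(3,5) simple_graph_nbhd_subset by fastforce+
  ultimately have "\<not> nbhd E v \<subseteq> cnbhd E x" "\<not> nbhd E v \<subseteq> cnbhd E y"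
    using assms(1,4) unfolding no_dominated_edge_def by blast+
  then have "{x, z} \<notin> E" "{y, z} \<notin> E"
    using xy assms(5) unfolding cnbhd_def nbhd_def by (auto simp: insert_commute)
  then have "matched_clique_partition E v {x, y} {z}"
    using xy assms(5-8) unfolding matched_clique_partition_def is_clique_def
    by (auto simp: insert_commute)
  then show False
    using assms(2,4) by blast
qed

lemma hits_edges_exchange:
  assumes "simple_graph V E"
    and "\<forall>e\<in>E. v \<notin> e \<longrightarrow> e \<inter> C \<noteq> {}"
    and "nbhd E m - {v} \<subseteq> C"
  shows "\<forall>e\<in>E. e \<inter> insert v (C - {m}) \<noteq> {}"
proof
  fix e assume "e \<in> E"
  then obtain x y where e: "e = {x, y}" "x \<noteq> y"
    using assms(1) by (blast elim: simple_graph_edgeE)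
  have "y \<in> nbhd E x" "x \<in> nbhd E y"
    using \<open>e \<in> E\<close> e unfolding nbhd_def by (auto simp: insert_commute)
  then show "e \<inter> insert v (C - {m}) \<noteq> {}"
    using assms(2,3) \<open>e \<in> E\<close> e by blast
qed

locale degree_three_vertex =
  fixes V :: "'a set" and E :: "'a set set" and v a b c :: 'a
  assumes graph: "simple_graph V E"
    and v_in_V: "v \<in> V"
    and distinct: "a \<noteq> b" "b \<noteq> c" "a \<noteq> c"
    and nbhd_v: "nbhd E v = {a, b, c}"
begin

lemma v_notin_nbhd: "v \<notin> {a, b, c}"
  using simple_graph_not_in_nbhd_self[OF graph] nbhd_v by metis

lemma nbhd_subset: "{a, b, c} \<subseteq> V"
  using simple_graph_nbhd_subset[OF graph] nbhd_v by metis

lemma edge_at_v: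
  assumes "e \<in> E" "v \<in> e"
  obtains x where "x \<in> {a, b, c}" "e = {v, x}"
proof -
  obtain w where e: "e = {v, w}"
    using assms by (auto elim!: simple_graph_edgeE[OF graph] simp: insert_commute)
  then have "w \<in> {a, b, c}"
    using assms(1) nbhd_v unfolding nbhd_def by blast
  then show thesis
    using e that by blast
qed

lemma hits_reduced_edges_iff:
  "(\<forall>e\<in>reduced_edges E v a b c. e \<inter> X \<noteq> {}) \<longleftrightarrow>
     (\<forall>e\<in>E. v \<notin> e \<longrightarrow> e \<inter> X \<noteq> {}) \<and> (a \<in> X \<or> b \<in> X) \<and> (b \<in> X \<or> c \<in> X) \<and>
     (\<forall>x\<in>nbhd E b - {a, v}. a \<in> X \<or> x \<in> X) \<and>
     (\<forall>x\<in>nbhd E c - {b, v}. b \<in> X \<or> x \<in> X) \<and>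
     (\<forall>x\<in>nbhd E a - {c, v}. c \<in> X \<or> x \<in> X)"
  (is "?hits \<longleftrightarrow> ?conds")
proof
  have reduced_edge: "{p, q} \<in> reduced_edges E v a b c"
    if "p \<noteq> q" "p \<in> {a, b, c}" "q \<noteq> v"
      "(p = a \<and> q = b) \<or> (p = b \<and> q = c) \<or>
       (p = a \<and> q \<in> nbhd E b) \<or> (p = b \<and> q \<in> nbhd E c) \<or> (p = c \<and> q \<in> nbhd E a)"
    for p q
    unfolding reduced_edges_def new_edges_def
    using that v_notin_nbhd by (intro UnI2 CollectI exI[of _ p] exI[of _ q]) auto
  assume hits: ?hits
  have hit: "p \<in> X \<or> q \<in> X" if "{p, q} \<in> reduced_edges E v a b c" for p q
    using bspec[OF hits that] by blast
  have "\<forall>e\<in>E. v \<notin> e \<longrightarrow> e \<inter> X \<noteq> {}"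
    using hits unfolding reduced_edges_def by blast
  moreover have "a \<in> X \<or> b \<in> X" "b \<in> X \<or> c \<in> X"
    using distinct v_notin_nbhd by (intro hit reduced_edge; auto)+
  moreover have "a \<in> X \<or> x \<in> X" if "x \<in> nbhd E b - {a, v}" for x
    using that by (intro hit reduced_edge) auto
  moreover have "b \<in> X \<or> x \<in> X" if "x \<in> nbhd E c - {b, v}" for x
    using that by (intro hit reduced_edge) auto
  moreover have "c \<in> X \<or> x \<in> X" if "x \<in> nbhd E a - {c, v}" for x
    using that by (intro hit reduced_edge) auto
  ultimately show ?conds
    by blast
next
  assume conds: ?conds
  show ?hits
  proof
    fix e assume "e \<in> reduced_edges E v a b c"
    then consider "e \<in> E" "v \<notin> e"
      | p q where "e = {p, q}" "p \<noteq> q" "q \<noteq> v"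
        "(p = a \<and> q = b) \<or> (p = b \<and> q = c) \<or>
         (p = a \<and> q \<in> nbhd E b) \<or> (p = b \<and> q \<in> nbhd E c) \<or> (p = c \<and> q \<in> nbhd E a)"
      unfolding reduced_edges_def new_edges_def by blast
    then show "e \<inter> X \<noteq> {}"
      using conds by cases auto
  qed
qed

lemma has_vc_reduced_if_has_vc:
  assumes "has_vc V E k"
  shows "has_vc (V - {v}) (reduced_edges E v a b c) k"
proof -
  obtain C where C: "C \<subseteq> V" "\<forall>e\<in>E. e \<inter> C \<noteq> {}" "int (card C) \<le> k"
    using assms unfolding has_vc_def is_vertex_cover_def by blast
  have nbhd_covered: "q \<in> C \<or> x \<in> C" if "x \<in> nbhd E q" for q x
    using bspec[OF C(2), of "{q, x}"] that unfolding nbhd_def by blast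
  obtain C' where C': "C' \<subseteq> V - {v}" "card C' \<le> card C" "C - {v} \<subseteq> C'"
    "a \<in> C' \<or> b \<in> C'" "b \<in> C' \<or> c \<in> C'"
    "b \<in> C \<Longrightarrow> a \<in> C'" "c \<in> C \<Longrightarrow> b \<in> C'" "a \<in> C \<Longrightarrow> c \<in> C'"
  proof (cases "v \<in> C")
    case False
    then have "{a, b, c} \<subseteq> C"
      using nbhd_covered[of _ v] nbhd_v False by blast
    then show thesis
      using that[of C] C(1) False by blast
  next
    case True
    (* m is the vertex of {a, b, c} missing from C if at most one is missing, the cyclic
       predecessor (in the order a, b, c) of the only one in C if there is one, and b if
       there is none. *)
    obtain m where m: "m \<in> {a, b, c}"
      and props: "a \<in> insert m (C - {v}) \<or> b \<in> insert m (C - {v})"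
        "b \<in> insert m (C - {v}) \<or> c \<in> insert m (C - {v})"
        "b \<in> C \<Longrightarrow> a \<in> insert m (C - {v})"
        "c \<in> C \<Longrightarrow> b \<in> insert m (C - {v})"
        "a \<in> C \<Longrightarrow> c \<in> insert m (C - {v})"
      using v_notin_nbhd by auto
    show thesis
    proof (rule that)
      show "insert m (C - {v}) \<subseteq> V - {v}"
        using C(1) m nbhd_subset v_notin_nbhd by blast
      show "card (insert m (C - {v})) \<le> card C"
        using True finite_subset[OF C(1)] graph card_gt_0_iff[of C] unfolding simple_graph_def
        by (auto simp: card_insert_if)
    qed (use props in auto)
  qed
  have "e \<inter> C' \<noteq> {}" if "e \<in> E" "v \<notin> e" for e
    using C(2) C'(3) that by blast
  moreover have "a \<in> C' \<or> x \<in> C'" if "x \<in> nbhd E b - {a, v}" for x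
    using nbhd_covered[of x b] C'(3,6) that by blast
  moreover have "b \<in> C' \<or> x \<in> C'" if "x \<in> nbhd E c - {b, v}" for x
    using nbhd_covered[of x c] C'(3,7) that by blast
  moreover have "c \<in> C' \<or> x \<in> C'" if "x \<in> nbhd E a - {c, v}" for x
    using nbhd_covered[of x a] C'(3,8) that by blast
  ultimately have "\<forall>e\<in>reduced_edges E v a b c. e \<inter> C' \<noteq> {}"
    unfolding hits_reduced_edges_iff using C'(4,5) by blast
  then show ?thesis
    using C(3) C'(1,2) unfolding has_vc_def is_vertex_cover_def by (intro exI[of _ C']) simp
qed

lemma has_vc_if_has_vc_reduced:
  assumes independent: "{a, b} \<notin> E" "{b, c} \<notin> E" "{a, c} \<notin> E"
    and "has_vc (V - {v}) (reduced_edges E v a b c) k"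
  shows "has_vc V E k"
proof -
  obtain C where C: "C \<subseteq> V - {v}" "\<forall>e\<in>reduced_edges E v a b c. e \<inter> C \<noteq> {}"
    "int (card C) \<le> k"
    using assms(4) unfolding has_vc_def is_vertex_cover_def by blast
  then have old_edges: "\<forall>e\<in>E. v \<notin> e \<longrightarrow> e \<inter> C \<noteq> {}"
    and ab: "a \<in> C \<or> b \<in> C" and bc: "b \<in> C \<or> c \<in> C"
    and nbhd_b: "\<forall>x\<in>nbhd E b - {a, v}. a \<in> C \<or> x \<in> C"
    and nbhd_c: "\<forall>x\<in>nbhd E c - {b, v}. b \<in> C \<or> x \<in> C"
    and nbhd_a: "\<forall>x\<in>nbhd E a - {c, v}. c \<in> C \<or> x \<in> C"
    unfolding hits_reduced_edges_iff by blast+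
  have "a \<notin> nbhd E b" "b \<notin> nbhd E c" "c \<notin> nbhd E a"
    using independent unfolding nbhd_def by (auto simp: insert_commute)
  have finite_C: "finite C"
    using C(1) graph finite_subset unfolding simple_graph_def by blast
  obtain C' where C': "is_vertex_cover V E C'" "card C' \<le> card C"
  proof (cases "{a, b, c} \<subseteq> C")
    case True
    have "e \<inter> C \<noteq> {}" if "e \<in> E" for e
      using True old_edges that by (cases "v \<in> e") (auto elim: edge_at_v)
    then show thesis
      using that[of C] C(1) unfolding is_vertex_cover_def by blast
  next
    case False
    (* If a is not in C, the edges {a, x} of G' with x in N(b) put N(b) - v into C;
       the other cases are the same up to rotating a, b, c. *)
    obtain m where m: "m \<in> C" "m \<in> {a, b, c}" "nbhd E m - {v} \<subseteq> C"
    proof -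
      consider "a \<notin> C" | "a \<in> C" "b \<notin> C" | "a \<in> C" "b \<in> C" "c \<notin> C"
        using False by blast
      then show thesis
      proof cases
        case 1
        then show thesis
          using that[of b] ab nbhd_b \<open>a \<notin> nbhd E b\<close> by blast
      next
        case 2
        then show thesis
          using that[of c] bc nbhd_c \<open>b \<notin> nbhd E c\<close> by blast
      next
        case 3
        then show thesis
          using that[of a] nbhd_a \<open>c \<notin> nbhd E a\<close> by blast
      qed
    qed
    have "is_vertex_cover V E (insert v (C - {m}))"
      using hits_edges_exchange[OF graph old_edges m(3)] C(1) v_in_V
      unfolding is_vertex_cover_def by blast
    moreover have "card (insert v (C - {m})) = card C"
      using C(1) m(1) finite_C card_gt_0_iff[of C] by (auto simp: card_insert_if)
    ultimately show thesis
      using that by simp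
  qed
  then show ?thesis
    using C(3) unfolding has_vc_def by (intro exI[of _ C']) simp
qed

end

theorem proposition6:
  fixes V :: "'a set" and E :: "'a set set" and k :: int and v a b c :: 'a
  assumes G: "simple_graph V E"
    and A: "\<not> (\<exists>u\<in>V. \<exists>w\<in>V. {u, w} \<in> E \<and> nbhd E w \<subseteq> cnbhd E u)"
    and B: "\<not> (\<exists>w\<in>V. \<exists>C1 C2. C1 \<union> C2 = nbhd E w \<and> C1 \<inter> C2 = {} \<and>
               card C1 \<ge> card C2 \<and> is_clique E C1 \<and> is_clique E C2 \<and>
               (\<forall>c1\<in>C1. \<exists>!c2. c2 \<in> C2 \<and> {c1, c2} \<notin> E))"
    and v: "v \<in> V"
    and abc: "a \<noteq> b" "b \<noteq> c" "a \<noteq> c"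
    and Nv: "nbhd E v = {a, b, c}"
  shows "has_vc V E k \<longleftrightarrow> has_vc (V - {v}) (reduced_edges E v a b c) k"
proof -
  interpret degree_three_vertex V E v a b c
    using G v abc Nv by unfold_locales
  have no_dom: "no_dominated_edge V E"
    using A unfolding no_dominated_edge_def by blast
  have no_part: "\<forall>w\<in>V. \<forall>C1 C2. \<not> matched_clique_partition E w C1 C2"
    using B unfolding matched_clique_partition_def by blast
  have "{a, b} \<notin> E" "{b, c} \<notin> E" "{c, a} \<notin> E"
    using degree_three_nbhd_no_edge[OF no_dom no_part G v] Nv abc
    by (metis insert_commute)+
  then show ?thesis
    using has_vc_reduced_if_has_vc has_vc_if_has_vc_reduced by (metis insert_commute)
qed

end
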